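(* Let $M$ be a $\lambda$-term in head-normal form and $\vec x$ a list of $n$ distinct variables with $FV(M)\subseteq\vec x$. Then $\llbracket M\rrbracket_{\vec x}$ is not the zero distributor, i.e. there exist $\Delta\in(SD)^n$ and $a\in D$ with $\llbracket M\rrbracket_{\vec x}(\Delta,a)\neq\emptyset$.
   Context: A $\lambda$-term is in head-normal form if it has the shape $\lambda y_1\dots\lambda y_m.\,y\,Q_1\cdots Q_p$ ($m,p\ge0$, $y$ a variable). $[n]=\{1,\dots,n\}$. Fix a class $\mathcal C$ of functions between finite ordinals equal to one of: all bijections, all injections, all surjections, all functions. For a small category $X$, $SX$ has finite lists of objects of $X$ as objects and morphisms $\langle x_1,\dots,x_n\rangle\to\langle y_1,\dots,y_m\rangle$ the tuples $\langle\alpha,f_1,\dots,f_m\rangle$ with $\alpha:[m]\to[n]$ in $\mathcal C$, $f_i:x_{\alpha(i)}\to y_i$; composite of $\langle\alpha,\vec f\rangle$ then $\langle\beta,\vec g\rangle$ is $\langle\alpha\circ\beta,(g_i\circ f_{\beta(i)})_i\rangle$; tensor $\oplus$ = concatenation, unit $\langle\rangle$. Fix a small category $A$. $D=D_A$ is the colimit of $D_0=A$, $D_{k+1}=(SD_k)^{o}\times D_k\sqcup A$ along canonical inclusions: objects $a::=o\mid\vec a\Rightarrow a$ ($o\in\mathrm{Ob}(A)$); morphisms are those of $A$ and $\langle\alpha,\vec f\rangle\Rightarrow f:(\vec a\Rightarrow a)\to(\vec a'\Rightarrow a')$ for $\langle\alpha,\vec f\rangle:\vec a'\to\vec a$ in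 $SD$, $f:a\to a'$. $SD=S(D_A)$. Contexts are objects of $(SD)^n$; $\otimes$ is componentwise concatenation; $\Delta\oplus\langle\vec a\rangle$ appends a component. Denotation $\llbracket M\rrbracket_{\vec x}:((SD)^n)^{o}\times D\to\mathrm{Set}$ for $\vec x=\langle x_1..x_n\rangle\supseteq FV(M)$: $\llbracket x_i\rrbracket_{\vec x}(\Delta,a)=(SD)^n(\Delta,\langle\langle\rangle,\dots,\langle a\rangle,\dots,\langle\rangle\rangle)$ ($\langle a\rangle$ at position $i$); $\llbracket\lambda y.P\rrbracket_{\vec x}(\Delta,a)=\llbracket P\rrbracket_{\vec x\oplus\langle y\rangle}(\Delta\oplus\langle\vec a'\rangle,a')$ if $a=\vec a'\Rightarrow a'$, $\emptyset$ if $a$ atomic; $\llbracket PQ\rrbracket_{\vec x}(\Delta,a)=\int^{\vec a=\langle a_1..a_k\rangle\in SD}\int^{\Gamma_0..\Gamma_k\in(SD)^n}\llbracket P\rrbracket_{\vec x}(\Gamma_0,\vec a\Rightarrow a)\times\prod_{i=1}^k\llbracket Q\rrbracket_{\vec x}(\Gamma_i,a_i)\times(SD)^n(\Delta,\bigotimes_{i=0}^k\Gamma_i)$. *)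

theory Defs
  imports Main
begin

text \<open>A small category A: a set of objects, hom-sets, identities and composition
  (cmp g f is g after f).\<close>

record ('o,'m) cat =
  Ob  :: "'o set"
  Hom :: "'o \<Rightarrow> 'o \<Rightarrow> 'm set"
  idm :: "'o \<Rightarrow> 'm"
  cmp :: "'m \<Rightarrow> 'm \<Rightarrow> 'm"

definition is_category :: "('o,'m) cat \<Rightarrow> bool" where
  "is_category A \<longleftrightarrow>
     (\<forall>a\<in>Ob A. idm A a \<in> Hom A a a) \<and>
     (\<forall>a b f. f \<in> Hom A a b \<longrightarrow> a \<in> Ob A \<and> b \<in> Ob A) \<and>
     (\<forall>a b c f g. f \<in> Hom A a b \<longrightarrow> g \<in> Hom A b c \<longrightarrow> cmp A g f \<in> Hom A a c) \<and>
     (\<forall>a b f. f \<in> Hom A a b \<longrightarrow> cmp A f (idm A a) = f \<and> cmp A (idm A b) f = f) \<and>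
     (\<forall>a b c d f g h. f \<in> Hom A a b \<longrightarrow> g \<in> Hom A b c \<longrightarrow> h \<in> Hom A c d \<longrightarrow>
        cmp A h (cmp A g f) = cmp A (cmp A h g) f)"

text \<open>A function [m] -> [n] is represented 0-indexed as a list alpha of length m
  with entries < n (alpha ! i is the image of i+1, shifted by one).\<close>

datatype fclass = Bijections | Injections | Surjections | AllFunctions

definition inC :: "fclass \<Rightarrow> nat list \<Rightarrow> nat \<Rightarrow> nat \<Rightarrow> bool" where
  "inC C \<alpha> m n \<longleftrightarrow> length \<alpha> = m \<and> (\<forall>i<m. \<alpha> ! i < n) \<and>
     (case C of
        Bijections \<Rightarrow> bij_betw ((!) \<alpha>) {..<m} {..<n}
      | Injections \<Rightarrow> inj_on ((!) \<alpha>) {..<m}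
      | Surjections \<Rightarrow> (!) \<alpha> ` {..<m} = {..<n}
      | AllFunctions \<Rightarrow> True)"

datatype 'o ty = Atom 'o | Arr "'o ty list" "'o ty"

text \<open>Morphisms of D: DA f (f in A) and DArr alpha fs f standing for
  <alpha, fs> => f.\<close>
datatype 'm dm = DA 'm | DArr "nat list" "'m dm list" "'m dm"

type_synonym 'm smor = "nat list \<times> 'm dm list"   \<comment> \<open>morphisms of SD\<close>
type_synonym 'o ctx = "'o ty list list"            \<comment> \<open>objects of (SD)^n\<close>
type_synonym 'm cmor = "'m smor list"              \<comment> \<open>morphisms of (SD)^n\<close>

inductive objD :: "('o,'m) cat \<Rightarrow> 'o ty \<Rightarrow> bool" for A where
  "c \<in> Ob A \<Longrightarrow> objD A (Atom c)"
| "(\<forall>b\<in>set bs. objD A b) \<Longrightarrow> objD A a \<Longrightarrow> objD A (Arr bs a)"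

text \<open>homD C A a a' f : f is a morphism a -> a' in D.  For arrows,
  <alpha,fs> : bs' -> bs in SD, i.e. alpha : [length bs] -> [length bs'] in C and
  fs ! i : bs' ! (alpha ! i) -> bs ! i.\<close>
inductive homD :: "fclass \<Rightarrow> ('o,'m) cat \<Rightarrow> 'o ty \<Rightarrow> 'o ty \<Rightarrow> 'm dm \<Rightarrow> bool" for C A where
  "f \<in> Hom A c c' \<Longrightarrow> c \<in> Ob A \<Longrightarrow> c' \<in> Ob A \<Longrightarrow> homD C A (Atom c) (Atom c') (DA f)"
| "(\<forall>b\<in>set bs. objD A b) \<Longrightarrow> (\<forall>b\<in>set bs'. objD A b) \<Longrightarrow>
   inC C \<alpha> (length bs) (length bs') \<Longrightarrow> length fs = length bs \<Longrightarrow>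
   (\<forall>i<length bs. homD C A (bs' ! (\<alpha> ! i)) (bs ! i) (fs ! i)) \<Longrightarrow>
   homD C A a a' f \<Longrightarrow>
   homD C A (Arr bs a) (Arr bs' a') (DArr \<alpha> fs f)"

definition homS :: "fclass \<Rightarrow> ('o,'m) cat \<Rightarrow> 'o ty list \<Rightarrow> 'o ty list \<Rightarrow> 'm smor \<Rightarrow> bool" where
  "homS C A xs ys \<phi> \<longleftrightarrow> (case \<phi> of (\<alpha>, fs) \<Rightarrow>
     (\<forall>x\<in>set xs. objD A x) \<and> (\<forall>y\<in>set ys. objD A y) \<and>
     inC C \<alpha> (length ys) (length xs) \<and> length fs = length ys \<and>
     (\<forall>i<length ys. homD C A (xs ! (\<alpha> ! i)) (ys ! i) (fs ! i)))"

definition objC :: "('o,'m) cat \<Rightarrow> nat \<Rightarrow> 'o ctx \<Rightarrow> bool" where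
  "objC A n \<Delta> \<longleftrightarrow> length \<Delta> = n \<and> (\<forall>\<Gamma>\<in>set \<Delta>. \<forall>b\<in>set \<Gamma>. objD A b)"

definition homC :: "fclass \<Rightarrow> ('o,'m) cat \<Rightarrow> 'o ctx \<Rightarrow> 'o ctx \<Rightarrow> 'm cmor \<Rightarrow> bool" where
  "homC C A \<Delta> \<Delta>' \<delta> \<longleftrightarrow> length \<Delta>' = length \<Delta> \<and> length \<delta> = length \<Delta> \<and>
     (\<forall>l<length \<Delta>. homS C A (\<Delta> ! l) (\<Delta>' ! l) (\<delta> ! l))"

primrec idD :: "('o,'m) cat \<Rightarrow> 'o ty \<Rightarrow> 'm dm" where
  "idD A (Atom c) = DA (idm A c)"
| "idD A (Arr bs a) = DArr [0..<length bs] (map (idD A) bs) (idD A a)"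

definition idS :: "('o,'m) cat \<Rightarrow> 'o ty list \<Rightarrow> 'm smor" where
  "idS A xs = ([0..<length xs], map (idD A) xs)"

definition idC :: "('o,'m) cat \<Rightarrow> 'o ctx \<Rightarrow> 'm cmor" where
  "idC A \<Delta> = map (idS A) \<Delta>"

text \<open>Composition in D, diagrammatic order: seqD A f g is "f then g".\<close>
function seqD :: "('o,'m) cat \<Rightarrow> 'm dm \<Rightarrow> 'm dm \<Rightarrow> 'm dm" where
  "seqD A (DA f) (DA g) = DA (cmp A g f)"
| "seqD A (DArr \<alpha> fs f) (DArr \<beta> gs g) =
     DArr (map (\<lambda>j. \<beta> ! j) \<alpha>)
          (map (\<lambda>(j, h). if j < length gs then seqD A (gs ! j) h else undefined) (zip \<alpha> fs))
          (seqD A f g)"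
| "seqD A (DA f) (DArr \<beta> gs g) = undefined"
| "seqD A (DArr \<alpha> fs f) (DA g) = undefined"
  by pat_completeness auto
termination
proof (relation "measure (\<lambda>(A, f, g). size f + size g)", goal_cases)
  case 1 then show ?case by simp
next
  case (2 A \<alpha> fs f \<beta> gs g x j h)
  then have "h \<in> set fs" by (auto dest: set_zip_rightD)
  then have "size h \<le> size_list size fs" by (simp add: size_list_estimation')
  moreover have "size (gs ! j) \<le> size_list size gs"
    using 2 by (meson nth_mem order_refl size_list_estimation')
  ultimately show ?case by simp
next
  case 3 then show ?case by simp
qed

definition seqS :: "('o,'m) cat \<Rightarrow> 'm smor \<Rightarrow> 'm smor \<Rightarrow> 'm smor" where
  "seqS A \<phi> \<psi> = (case \<phi> of (\<alpha>, fs) \<Rightarrow> case \<psi> of (\<beta>, gs) \<Rightarrow>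
     (map (\<lambda>j. \<alpha> ! j) \<beta>, map (\<lambda>(j, g). seqD A (fs ! j) g) (zip \<beta> gs)))"

definition seqC :: "('o,'m) cat \<Rightarrow> 'm cmor \<Rightarrow> 'm cmor \<Rightarrow> 'm cmor" where
  "seqC A \<delta> \<delta>' = map2 (seqS A) \<delta> \<delta>'"

text \<open>Tensor (concatenation) of SD-morphisms; each is given together with the
  length of its source.\<close>
fun tensS :: "(nat \<times> 'm smor) list \<Rightarrow> 'm smor" where
  "tensS [] = ([], [])"
| "tensS ((m, (\<alpha>, fs)) # rest) =
     (case tensS rest of (\<beta>, gs) \<Rightarrow> (\<alpha> @ map (\<lambda>j. j + m) \<beta>, fs @ gs))"

definition tensCtx :: "nat \<Rightarrow> 'o ctx list \<Rightarrow> 'o ctx" where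
  "tensCtx n \<Gamma>s = map (\<lambda>l. concat (map (\<lambda>\<Gamma>. \<Gamma> ! l) \<Gamma>s)) [0..<n]"

definition tensM :: "nat \<Rightarrow> 'o ctx list \<Rightarrow> 'm cmor list \<Rightarrow> 'm cmor" where
  "tensM n \<Gamma>s \<gamma>s = map (\<lambda>l. tensS (map2 (\<lambda>\<Gamma> \<gamma>. (length (\<Gamma> ! l), \<gamma> ! l)) \<Gamma>s \<gamma>s)) [0..<n]"

text \<open>The structural morphism concat_j Ls_j -> concat_i Ls_(alpha i) of SD
  induced by alpha (identities on the objects).\<close>
definition sigmaS :: "('o,'m) cat \<Rightarrow> 'o ty list list \<Rightarrow> nat list \<Rightarrow> 'm smor" where
  "sigmaS A Ls \<alpha> =
     (concat (map (\<lambda>j. map (\<lambda>t. sum_list (map length (take j Ls)) + t) [0..<length (Ls ! j)]) \<alpha>),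
      concat (map (\<lambda>j. map (idD A) (Ls ! j)) \<alpha>))"

definition sigmaC :: "('o,'m) cat \<Rightarrow> nat \<Rightarrow> 'o ctx list \<Rightarrow> nat list \<Rightarrow> 'm cmor" where
  "sigmaC A n \<Gamma>s \<alpha> = map (\<lambda>l. sigmaS A (map (\<lambda>\<Gamma>. \<Gamma> ! l) \<Gamma>s) \<alpha>) [0..<n]"

definition unitCtx :: "nat \<Rightarrow> nat \<Rightarrow> 'o ty \<Rightarrow> 'o ctx" where
  "unitCtx n i a = map (\<lambda>l. if l = i then [a] else []) [0..<n]"

definition unitMor :: "nat \<Rightarrow> nat \<Rightarrow> 'm dm \<Rightarrow> 'm cmor" where
  "unitMor n i f = map (\<lambda>l. if l = i then ([0], [f]) else ([], [])) [0..<n]"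

datatype 'v lterm = Var 'v | Lam 'v "'v lterm" | App "'v lterm" "'v lterm"

primrec FV :: "'v lterm \<Rightarrow> 'v set" where
  "FV (Var x) = {x}"
| "FV (Lam y P) = FV P - {y}"
| "FV (App P Q) = FV P \<union> FV Q"

primrec head_var_app :: "'v lterm \<Rightarrow> bool" where
  "head_var_app (Var y) = True"
| "head_var_app (Lam y P) = False"
| "head_var_app (App P Q) = head_var_app P"

primrec hnf :: "'v lterm \<Rightarrow> bool" where
  "hnf (Var y) = True"
| "hnf (Lam y P) = hnf P"
| "hnf (App P Q) = head_var_app (App P Q)"

text \<open>Position of a variable in the variable list (last occurrence, so that
  inner binders shadow outer ones; for distinct lists this is the unique index).\<close>
definition vpos :: "'v list \<Rightarrow> 'v \<Rightarrow> nat" where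
  "vpos xs y = Max {i. i < length xs \<and> xs ! i = y}"

text \<open>Set-valued functors are represented by setoids: a carrier of raw elements, an
  equivalence relation on it, and an action of morphisms on raw elements.  The actual
  set [[M]](Delta,a) is the quotient carrier // relation.  Coends of Set-valued
  functors are quotients of disjoint unions by the equivalence relation generated by
  the functorial actions.\<close>

datatype ('o,'m) val =
    VMor "'m cmor"
  | VApp "'o ty list" "'o ctx" "'o ctx list" "('o,'m) val" "('o,'m) val list" "'m cmor"

record ('o,'m) denot =
  car :: "'o ctx \<Rightarrow> 'o ty \<Rightarrow> ('o,'m) val set"
  rel :: "'o ctx \<Rightarrow> 'o ty \<Rightarrow> (('o,'m) val \<times> ('o,'m) val) set"
  act :: "'m cmor \<Rightarrow> 'm dm \<Rightarrow> ('o,'m) val \<Rightarrow> ('o,'m) val"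

definition app_car ::
  "fclass \<Rightarrow> ('o,'m) cat \<Rightarrow> nat \<Rightarrow> ('o,'m) denot \<Rightarrow> ('o,'m) denot \<Rightarrow> 'o ctx \<Rightarrow> 'o ty \<Rightarrow> ('o,'m) val set" where
  "app_car C A n RP RQ \<Delta> a =
     {VApp bs \<Gamma>0 \<Gamma>s p qs \<delta> | bs \<Gamma>0 \<Gamma>s p qs \<delta>.
        (\<forall>b\<in>set bs. objD A b) \<and> objC A n \<Gamma>0 \<and> length \<Gamma>s = length bs \<and>
        (\<forall>\<Gamma>\<in>set \<Gamma>s. objC A n \<Gamma>) \<and>
        p \<in> car RP \<Gamma>0 (Arr bs a) \<and>
        length qs = length bs \<and> (\<forall>i<length bs. qs ! i \<in> car RQ (\<Gamma>s ! i) (bs ! i)) \<and>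
        homC C A \<Delta> (tensCtx n (\<Gamma>0 # \<Gamma>s)) \<delta>}"

text \<open>Generators of the coend relation: (1) componentwise equivalence,
  (2) the coend over Gamma_0..Gamma_k, (3) the coend over the list a in SD
  (with the Gamma_1..Gamma_k reindexed along the SD-morphism).\<close>
definition app_gen ::
  "fclass \<Rightarrow> ('o,'m) cat \<Rightarrow> nat \<Rightarrow> ('o,'m) denot \<Rightarrow> ('o,'m) denot \<Rightarrow> 'o ctx \<Rightarrow> 'o ty \<Rightarrow>
   (('o,'m) val \<times> ('o,'m) val) set" where
  "app_gen C A n RP RQ \<Delta> a = {(x, y). x \<in> app_car C A n RP RQ \<Delta> a \<and> y \<in> app_car C A n RP RQ \<Delta> a \<and>
     ((\<exists>bs \<Gamma>0 \<Gamma>s p qs p' qs' \<delta>.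
         x = VApp bs \<Gamma>0 \<Gamma>s p qs \<delta> \<and> y = VApp bs \<Gamma>0 \<Gamma>s p' qs' \<delta> \<and>
         (p, p') \<in> rel RP \<Gamma>0 (Arr bs a) \<and> length qs' = length qs \<and>
         (\<forall>i<length qs. (qs ! i, qs' ! i) \<in> rel RQ (\<Gamma>s ! i) (bs ! i)))
    \<or> (\<exists>bs \<Gamma>0 \<Gamma>s \<Gamma>0' \<Gamma>s' \<gamma>0 \<gamma>s p' qs' \<delta>.
         length \<Gamma>s' = length \<Gamma>s \<and> length \<gamma>s = length \<Gamma>s \<and>
         homC C A \<Gamma>0 \<Gamma>0' \<gamma>0 \<and> (\<forall>i<length \<Gamma>s. homC C A (\<Gamma>s ! i) (\<Gamma>s' ! i) (\<gamma>s ! i)) \<and>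
         x = VApp bs \<Gamma>0 \<Gamma>s (act RP \<gamma>0 (idD A (Arr bs a)) p')
                (map (\<lambda>i. act RQ (\<gamma>s ! i) (idD A (bs ! i)) (qs' ! i)) [0..<length bs]) \<delta> \<and>
         y = VApp bs \<Gamma>0' \<Gamma>s' p' qs' (seqC A \<delta> (tensM n (\<Gamma>0 # \<Gamma>s) (\<gamma>0 # \<gamma>s))))
    \<or> (\<exists>bs cs \<alpha> fs \<Gamma>0 \<Gamma>s' p qs' \<delta>.
         homS C A cs bs (\<alpha>, fs) \<and> length \<Gamma>s' = length cs \<and>
         x = VApp cs \<Gamma>0 \<Gamma>s' (act RP (idC A \<Gamma>0) (DArr \<alpha> fs (idD A a)) p) qs' \<delta> \<and>
         y = VApp bs \<Gamma>0 (map (\<lambda>j. \<Gamma>s' ! j) \<alpha>) p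
                (map (\<lambda>i. act RQ (idC A (\<Gamma>s' ! (\<alpha> ! i))) (fs ! i) (qs' ! (\<alpha> ! i))) [0..<length bs])
                (seqC A \<delta> (tensM n [\<Gamma>0, tensCtx n \<Gamma>s'] [idC A \<Gamma>0, sigmaC A n \<Gamma>s' \<alpha>]))))}"

primrec den :: "fclass \<Rightarrow> ('o,'m) cat \<Rightarrow> 'v lterm \<Rightarrow> 'v list \<Rightarrow> ('o,'m) denot" where
  "den C A (Var y) xs =
     \<lparr> car = (\<lambda>\<Delta> a. {VMor \<delta> | \<delta>. y \<in> set xs \<and>
                        homC C A \<Delta> (unitCtx (length xs) (vpos xs y) a) \<delta>}),
       rel = (\<lambda>\<Delta> a. Id_on {VMor \<delta> | \<delta>. y \<in> set xs \<and>
                        homC C A \<Delta> (unitCtx (length xs) (vpos xs y) a) \<delta>}),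
       act = (\<lambda>\<delta>' f v. case v of
                 VMor \<delta> \<Rightarrow> VMor (seqC A \<delta>' (seqC A \<delta> (unitMor (length xs) (vpos xs y) f)))
               | _ \<Rightarrow> v) \<rparr>"
| "den C A (Lam y P) xs =
     (let R = den C A P (xs @ [y]) in
     \<lparr> car = (\<lambda>\<Delta> a. case a of Atom _ \<Rightarrow> {} | Arr bs b \<Rightarrow> car R (\<Delta> @ [bs]) b),
       rel = (\<lambda>\<Delta> a. case a of Atom _ \<Rightarrow> {} | Arr bs b \<Rightarrow> rel R (\<Delta> @ [bs]) b),
       act = (\<lambda>\<delta>' f v. case f of DArr \<alpha> fs g \<Rightarrow> act R (\<delta>' @ [(\<alpha>, fs)]) g v | DA _ \<Rightarrow> v) \<rparr>)"
| "den C A (App P Q) xs =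
     (let RP = den C A P xs; RQ = den C A Q xs; n = length xs in
     \<lparr> car = app_car C A n RP RQ,
       rel = (\<lambda>\<Delta> a. Id_on (app_car C A n RP RQ \<Delta> a) \<union>
                     (app_gen C A n RP RQ \<Delta> a \<union> (app_gen C A n RP RQ \<Delta> a)\<inverse>)\<^sup>+),
       act = (\<lambda>\<delta>' f v. case v of
                 VApp bs \<Gamma>0 \<Gamma>s p qs \<delta> \<Rightarrow>
                   VApp bs \<Gamma>0 \<Gamma>s (act RP (idC A \<Gamma>0) (DArr [0..<length bs] (map (idD A) bs) f) p)
                        qs (seqC A \<delta>' \<delta>)
               | _ \<Rightarrow> v) \<rparr>)"

definition sem :: "fclass \<Rightarrow> ('o,'m) cat \<Rightarrow> 'v lterm \<Rightarrow> 'v list \<Rightarrow> 'o ctx \<Rightarrow> 'o ty \<Rightarrow> ('o,'m) val set set" where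
  "sem C A M xs \<Delta> a = car (den C A M xs) \<Delta> a // rel (den C A M xs) \<Delta> a"

end

theory Submission
  imports Defs
begin

text \<open>If M = \<lambda>y_1 \<dots> y_m. y Q_1 \<dots> Q_p, give the head variable y the type
  [] \<Rightarrow> \<dots> \<Rightarrow> [] \<Rightarrow> o with p empty argument lists, for an atom o of A. Each application
  in the spine then takes the coend summand with k = 0, so no element of the
  denotation of any Q_i is needed, and the identity of the one-variable context
  inhabits the denotation of the spine at o. The abstractions only move the last
  context component into the type. Finally, a quotient of a nonempty set is nonempty.\<close>

fun head_var :: "'v lterm \<Rightarrow> 'v" where
  "head_var (Var y) = y"
| "head_var (App P Q) = head_var P"

fun num_args :: "'v lterm \<Rightarrow> nat" where
  "num_args (Var y) = 0"
| "num_args (App P Q) = Suc (num_args P)"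

primrec empty_arrows :: "nat \<Rightarrow> 'o ty \<Rightarrow> 'o ty" where
  "empty_arrows 0 a = a"
| "empty_arrows (Suc k) a = empty_arrows k (Arr [] a)"

lemma head_var_in_FV: "head_var_app N \<Longrightarrow> head_var N \<in> FV N"
  by (induction N) auto

lemma objD_Arr_Nil: "objD A a \<Longrightarrow> objD A (Arr [] a)"
  by (auto intro: objD.intros)

lemma objD_empty_arrows: "objD A a \<Longrightarrow> objD A (empty_arrows k a)"
  by (induction k arbitrary: a) (auto intro: objD_Arr_Nil)

lemma objC_unitCtx: "objD A a \<Longrightarrow> objC A n (unitCtx n i a)"
  unfolding objC_def unitCtx_def by auto

lemma objC_snoc_obtain:
  assumes "objC A (Suc n) \<Delta>'"
  obtains \<Delta> bs where "\<Delta>' = \<Delta> @ [bs]" "objC A n \<Delta>" "\<forall>b\<in>set bs. objD A b"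
  using assms by (cases \<Delta>' rule: rev_exhaust) (auto simp: objC_def)

lemma inC_upt: "inC C [0..<m] m m"
  unfolding inC_def by (cases C) (auto simp: bij_betw_def inj_on_def image_def)

lemma homD_idD:
  assumes "is_category A" and "objD A a"
  shows "homD C A a a (idD A a)"
  using assms(2)
proof (induction rule: objD.induct)
  case (1 c)
  then show ?case
    using assms(1) unfolding is_category_def by (auto intro: homD.intros)
next
  case (2 bs a)
  then show ?case
    by (auto intro!: homD.intros inC_upt simp: nth_mem)
qed

lemma homS_idS:
  assumes "is_category A" and "\<forall>b\<in>set xs. objD A b"
  shows "homS C A xs xs (idS A xs)"
  using assms homD_idD[OF assms(1)] by (auto simp: homS_def idS_def inC_upt)

lemma homC_idC:
  assumes "is_category A" and "objC A n \<Delta>"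
  shows "homC C A \<Delta> \<Delta> (idC A \<Delta>)"
  using assms(2) homS_idS[OF assms(1)] nth_mem by (fastforce simp: homC_def idC_def objC_def)

lemma tensCtx_singleton: "length \<Delta> = n \<Longrightarrow> tensCtx n [\<Delta>] = \<Delta>"
  using map_nth[of \<Delta>] unfolding tensCtx_def by simp

lemma car_den_App:
  "car (den C A (App P Q) xs) = app_car C A (length xs) (den C A P xs) (den C A Q xs)"
  by (simp only: den.simps Let_def denot.select_convs)

lemma car_den_Lam_Arr:
  "car (den C A (Lam y P) xs) \<Delta> (Arr bs a) = car (den C A P (xs @ [y])) (\<Delta> @ [bs]) a"
  by (simp add: Let_def)

lemma app_car_nullary:
  assumes "is_category A" and "objC A n \<Delta>" and "p \<in> car RP \<Delta> (Arr [] a)"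
  shows "VApp [] \<Delta> [] p [] (idC A \<Delta>) \<in> app_car C A n RP RQ \<Delta> a"
proof -
  have "homC C A \<Delta> (tensCtx n [\<Delta>]) (idC A \<Delta>)"
    using homC_idC[OF assms(1,2)] assms(2) by (simp add: objC_def tensCtx_singleton)
  then show ?thesis
    using assms(2,3) unfolding app_car_def by auto
qed

lemma car_den_head_var_app_nonempty:
  assumes "is_category A" and "head_var_app N" and "head_var N \<in> set xs" and "objD A a"
  shows "car (den C A N xs)
           (unitCtx (length xs) (vpos xs (head_var N)) (empty_arrows (num_args N) a)) a \<noteq> {}"
  using assms(2-)
proof (induction N arbitrary: a)
  case (Var y)
  have "objC A (length xs) (unitCtx (length xs) (vpos xs y) a)"
    using Var(3) by (rule objC_unitCtx)
  then show ?case
    using homC_idC[OF assms(1)] Var(2) by auto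
next
  case (App P Q)
  let ?\<Delta> = "unitCtx (length xs) (vpos xs (head_var P)) (empty_arrows (num_args P) (Arr [] a))"
  have "objC A (length xs) ?\<Delta>"
    using App.prems(3) by (intro objC_unitCtx objD_empty_arrows objD_Arr_Nil)
  moreover obtain p where "p \<in> car (den C A P xs) ?\<Delta> (Arr [] a)"
    using App.IH App.prems objD_Arr_Nil by fastforce
  ultimately have "VApp [] ?\<Delta> [] p [] (idC A ?\<Delta>) \<in> car (den C A (App P Q) xs) ?\<Delta> a"
    unfolding car_den_App by (rule app_car_nullary[OF assms(1)])
  then show ?case by (simp del: den.simps) blast
qed simp

lemma car_den_head_var_app_ex:
  assumes "is_category A" and "Ob A \<noteq> {}" and "head_var_app N" and "FV N \<subseteq> set xs"
  shows "\<exists>\<Delta> a. objC A (length xs) \<Delta> \<and> objD A a \<and> car (den C A N xs) \<Delta> a \<noteq> {}"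
proof -
  obtain c where "c \<in> Ob A" using assms(2) by auto
  then have "objD A (Atom c)" by (rule objD.intros)
  moreover have "head_var N \<in> set xs"
    using assms(3,4) head_var_in_FV by blast
  ultimately show ?thesis
    using car_den_head_var_app_nonempty[OF assms(1,3)] objC_unitCtx objD_empty_arrows by blast
qed

lemma car_den_hnf_nonempty:
  assumes "is_category A" and "Ob A \<noteq> {}" and "hnf M" and "FV M \<subseteq> set xs"
  shows "\<exists>\<Delta> a. objC A (length xs) \<Delta> \<and> objD A a \<and> car (den C A M xs) \<Delta> a \<noteq> {}"
  using assms(3,4)
proof (induction M arbitrary: xs)
  case (Lam y P)
  have "hnf P" and "FV P \<subseteq> set (xs @ [y])"
    using Lam.prems by auto
  then obtain \<Delta>' a where \<Delta>': "objC A (Suc (length xs)) \<Delta>'" and a: "objD A a"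
      and ne: "car (den C A P (xs @ [y])) \<Delta>' a \<noteq> {}"
    using Lam.IH by fastforce
  obtain \<Delta> bs where "\<Delta>' = \<Delta> @ [bs]" "objC A (length xs) \<Delta>" "\<forall>b\<in>set bs. objD A b"
    using \<Delta>' by (rule objC_snoc_obtain)
  with a ne show ?case
    by (metis car_den_Lam_Arr objD.intros(2))
next
  case (Var y)
  then show ?case by (intro car_den_head_var_app_ex[OF assms(1,2)]) simp_all
next
  case (App P Q)
  then show ?case by (intro car_den_head_var_app_ex[OF assms(1,2)]) simp_all
qed

theorem lemma3:
  fixes C :: fclass and A :: "('o,'m) cat" and M :: "'v lterm" and xs :: "'v list"
  assumes "is_category A"
    and "Ob A \<noteq> {}"
    and "hnf M"
    and "distinct xs"
    and "FV M \<subseteq> set xs"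
  shows "\<exists>\<Delta> a. objC A (length xs) \<Delta> \<and> objD A a \<and> sem C A M xs \<Delta> a \<noteq> {}"
  using car_den_hnf_nonempty[OF assms(1,2,3,5)] by (simp add: sem_def)

end
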